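(* Let $d\ge2$ and let $R=(r_{ij})$ be a real $d\times d$ matrix with $r_{ii}=1$ for all $i$. Assume $R$ is not an $\mathcal S$-matrix and every principal sub-matrix of $R$ other than $R$ itself is completely-$\mathcal S$. Then for every $i\in\{1,\dots,d\}$ there exists $j\neq i$ with $r_{ij}\neq0$.
   Context: $x>0$ (resp. $x\ge0$) means all entries positive (resp. non-negative). A square matrix $M$ is an $\mathcal S$-matrix if there exists a vector $x\ge0$ with $Mx>0$; it is completely-$\mathcal S$ if all its principal sub-matrices (sub-matrices $(m_{ij})_{i,j\in I}$ for non-empty index sets $I$, including the full set) are $\mathcal S$-matrices. *)

theory Defs
  imports Main "HOL.Real"
begin

text \<open>A square matrix is represented as a function nat => nat => real; a principal
  sub-matrix is given by a non-empty index set I and consists of the entries M i j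
  with i, j in I.  A d x d matrix has index set {0..<d}.\<close>

definition S_matrix_on :: "nat set \<Rightarrow> (nat \<Rightarrow> nat \<Rightarrow> real) \<Rightarrow> bool" where
  "S_matrix_on I M \<longleftrightarrow>
     (\<exists>x :: nat \<Rightarrow> real. (\<forall>i\<in>I. x i \<ge> 0) \<and> (\<forall>i\<in>I. (\<Sum>j\<in>I. M i j * x j) > 0))"

definition completely_S_on :: "nat set \<Rightarrow> (nat \<Rightarrow> nat \<Rightarrow> real) \<Rightarrow> bool" where
  "completely_S_on I M \<longleftrightarrow> (\<forall>J. J \<subseteq> I \<and> J \<noteq> {} \<longrightarrow> S_matrix_on J M)"

end

theory Submission
  imports Defs
begin

text \<open>If some row i of R vanished off the diagonal, a semipositive vector x for the
  principal sub-matrix obtained by deleting i could be extended by a small positive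
  i-th entry t: row i then gives t > 0, and every other row changes by R k i * t,
  which is too little to destroy positivity.  So R itself would be an S-matrix.\<close>

lemma exists_small_pos_scalar:
  fixes c s :: "'a \<Rightarrow> real"
  assumes "finite J" and "\<forall>k\<in>J. s k > 0"
  shows "\<exists>t>0. \<forall>k\<in>J. c k * t < s k"
  using assms
proof (induction J rule: finite_induct)
  case empty
  show ?case
    by (intro exI[of _ 1]) simp
next
  case (insert k J)
  then obtain t where "t > 0" and t_small: "\<forall>l\<in>J. c l * t < s l"
    by auto
  define t' where "t' = min t (s k / (\<bar>c k\<bar> + 1))"
  have "t' > 0"
    using \<open>t > 0\<close> insert.prems by (simp add: t'_def)
  have "c k * t' < s k"
  proof -
    have "c k * t' \<le> \<bar>c k\<bar> * t'"
      using \<open>t' > 0\<close> by (intro mult_right_mono) simp_all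
    also have "\<dots> \<le> \<bar>c k\<bar> * (s k / (\<bar>c k\<bar> + 1))"
      by (intro mult_left_mono) (simp_all add: t'_def)
    also have "\<dots> < s k"
      using insert.prems by (simp add: field_simps)
    finally show ?thesis .
  qed
  moreover have "c l * t' < s l" if "l \<in> J" for l
  proof (cases "c l \<ge> 0")
    case True
    then have "c l * t' \<le> c l * t"
      by (intro mult_left_mono) (simp_all add: t'_def)
    moreover have "c l * t < s l"
      using t_small that by blast
    ultimately show ?thesis
      by linarith
  next
    case False
    then have "c l * t' < 0"
      using \<open>t' > 0\<close> by (simp add: mult_neg_pos)
    moreover have "s l > 0"
      using insert.prems that by blast
    ultimately show ?thesis
      by linarith
  qed
  ultimately show ?case
    using \<open>t' > 0\<close> by blast
qed

lemma S_matrix_on_insert: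
  assumes "S_matrix_on J M" and "finite J" and "i \<notin> J"
    and "M i i > 0" and "\<forall>j\<in>J. M i j = 0"
  shows "S_matrix_on (insert i J) M"
proof -
  obtain x where x_nonneg: "\<forall>j\<in>J. x j \<ge> 0"
    and x_pos: "\<forall>k\<in>J. (\<Sum>j\<in>J. M k j * x j) > 0"
    using assms(1) unfolding S_matrix_on_def by blast
  obtain t :: real where "t > 0"
    and t_small: "\<forall>k\<in>J. - M k i * t < (\<Sum>j\<in>J. M k j * x j)"
    using exists_small_pos_scalar[OF assms(2) x_pos, where c = "\<lambda>k. - M k i"] by blast
  define y where "y = x(i := t)"
  have row_sum: "(\<Sum>j\<in>insert i J. M k j * y j) = M k i * t + (\<Sum>j\<in>J. M k j * x j)" for k
  proof -
    have "(\<Sum>j\<in>J. M k j * y j) = (\<Sum>j\<in>J. M k j * x j)"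
      using assms(3) by (intro sum.cong) (auto simp: y_def)
    then show ?thesis
      using assms(2,3) by (simp add: y_def)
  qed
  have "(\<Sum>j\<in>insert i J. M k j * y j) > 0" if "k \<in> insert i J" for k
  proof (cases "k = i")
    case True
    then show ?thesis
      using row_sum[of i] assms(4,5) \<open>t > 0\<close> by simp
  next
    case False
    with that have "k \<in> J"
      by simp
    then show ?thesis
      using row_sum[of k] t_small by auto
  qed
  moreover have "\<forall>j\<in>insert i J. y j \<ge> 0"
    using x_nonneg \<open>t > 0\<close> by (simp add: y_def)
  ultimately show ?thesis
    unfolding S_matrix_on_def by blast
qed

theorem lemma1:
  fixes d :: nat and R :: "nat \<Rightarrow> nat \<Rightarrow> real"
  assumes "d \<ge> 2"
    and "\<forall>i<d. R i i = 1"
    and "\<not> S_matrix_on {0..<d} R"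
    and "\<forall>I. I \<subseteq> {0..<d} \<and> I \<noteq> {} \<and> I \<noteq> {0..<d} \<longrightarrow> completely_S_on I R"
  shows "\<forall>i<d. \<exists>j<d. j \<noteq> i \<and> R i j \<noteq> 0"
proof (rule ccontr)
  assume "\<not> ?thesis"
  then obtain i where "i < d" and row_zero: "\<forall>j<d. j \<noteq> i \<longrightarrow> R i j = 0"
    by auto
  define J where "J = {0..<d} - {i}"
  have "i \<in> {0..<d}" and "i \<notin> J"
    using \<open>i < d\<close> by (simp_all add: J_def)
  have "(if i = 0 then 1 else 0) \<in> J"
    using assms(1) \<open>i < d\<close> by (simp add: J_def)
  then have "J \<noteq> {}"
    by blast
  moreover have "J \<noteq> {0..<d}"
    using \<open>i \<in> {0..<d}\<close> \<open>i \<notin> J\<close> by metis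
  moreover have "J \<subseteq> {0..<d}"
    by (simp add: J_def)
  ultimately have "S_matrix_on J R"
    using assms(4) unfolding completely_S_on_def by blast
  then have "S_matrix_on (insert i J) R"
  proof (rule S_matrix_on_insert)
    show "\<forall>j\<in>J. R i j = 0"
      using row_zero by (simp add: J_def)
  qed (use assms(2) \<open>i < d\<close> \<open>i \<notin> J\<close> in \<open>simp_all add: J_def\<close>)
  moreover have "insert i J = {0..<d}"
    unfolding J_def using \<open>i \<in> {0..<d}\<close> by (rule insert_Diff)
  ultimately show False
    using assms(3) by simp
qed

end
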